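(* Let $G$ be a cograph whose edge connectivity is exactly $k$, and let $X$ be the set of vertices of degree $k$ in $G$. Then every set $E_{ca}\subseteq E(\overline{G})$ such that $G\cup E_{ca}$ is $(k+1)$-edge connected satisfies $|E_{ca}|\geq\rho(\overline{G}[X])$.
   Context: A cograph is a graph that can be built from single vertices by repeatedly taking disjoint unions and joins; equivalently a graph with no induced path on four vertices. $\overline{G}$ is the complement of $G$, $\overline{G}[X]$ the subgraph of $\overline{G}$ induced by $X$, and $G\cup F=(V(G),E(G)\cup F)$. The edge connectivity of a connected graph is the least size of a set of edges whose removal disconnects it; a graph is $k$-edge connected if its edge connectivity is $k$. An edge cover of a graph is a set of edges such that every vertex is incident to at least one of them. For a graph $H$: if $H$ is connected with at least two vertices, $\rho(H)$ is the minimum cardinality of an edge cover of $H$; for a trivial (one-vertex) component $H_i$, $\rho(H_i)=1$; if $H$ has components $H_1,\ldots,H_r$, $\rho(H)=\sum_i\rho(H_i)$. *)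

theory Defs
  imports Main
begin

definition all_pairs :: "'a set \<Rightarrow> 'a set set" where
  "all_pairs V = {{u, v} | u v. u \<in> V \<and> v \<in> V \<and> u \<noteq> v}"

definition simple_graph :: "'a set \<Rightarrow> 'a set set \<Rightarrow> bool" where
  "simple_graph V E \<longleftrightarrow> finite V \<and> E \<subseteq> all_pairs V"

inductive cograph :: "'a set \<Rightarrow> 'a set set \<Rightarrow> bool" where
  single: "cograph {v} {}"
| union: "\<lbrakk>cograph V1 E1; cograph V2 E2; V1 \<inter> V2 = {}\<rbrakk>
            \<Longrightarrow> cograph (V1 \<union> V2) (E1 \<union> E2)"
| join: "\<lbrakk>cograph V1 E1; cograph V2 E2; V1 \<inter> V2 = {}\<rbrakk>
            \<Longrightarrow> cograph (V1 \<union> V2) (E1 \<union> E2 \<union> {{u, v} | u v. u \<in> V1 \<and> v \<in> V2})"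

definition adj_rel :: "'a set set \<Rightarrow> ('a \<times> 'a) set" where
  "adj_rel E = {(u, v). {u, v} \<in> E \<and> u \<noteq> v}"

definition connected_graph :: "'a set \<Rightarrow> 'a set set \<Rightarrow> bool" where
  "connected_graph V E \<longleftrightarrow> V \<noteq> {} \<and> (\<forall>u\<in>V. \<forall>v\<in>V. (u, v) \<in> (adj_rel E)\<^sup>*)"

definition degree :: "'a set set \<Rightarrow> 'a \<Rightarrow> nat" where
  "degree E v = card {e \<in> E. v \<in> e}"

definition edge_connectivity :: "'a set \<Rightarrow> 'a set set \<Rightarrow> nat" where
  "edge_connectivity V E = (LEAST n. \<exists>F \<subseteq> E. card F = n \<and> \<not> connected_graph V (E - F))"

text \<open>As in the paper: a graph is k-edge connected if it is connected and its edge
  connectivity is (exactly) k.\<close>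
definition k_edge_connected :: "nat \<Rightarrow> 'a set \<Rightarrow> 'a set set \<Rightarrow> bool" where
  "k_edge_connected k V E \<longleftrightarrow> connected_graph V E \<and> edge_connectivity V E = k"

definition complement_edges :: "'a set \<Rightarrow> 'a set set \<Rightarrow> 'a set set" where
  "complement_edges V E = all_pairs V - E"

definition induced_edges :: "'a set set \<Rightarrow> 'a set \<Rightarrow> 'a set set" where
  "induced_edges E X = {e \<in> E. e \<subseteq> X}"

definition components :: "'a set \<Rightarrow> 'a set set \<Rightarrow> 'a set set" where
  "components V E = {{v \<in> V. (u, v) \<in> (adj_rel E)\<^sup>*} | u. u \<in> V}"

definition is_edge_cover :: "'a set \<Rightarrow> 'a set set \<Rightarrow> 'a set set \<Rightarrow> bool" where
  "is_edge_cover V E F \<longleftrightarrow> F \<subseteq> E \<and> (\<forall>v\<in>V. \<exists>e\<in>F. v \<in> e)"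

definition min_edge_cover :: "'a set \<Rightarrow> 'a set set \<Rightarrow> nat" where
  "min_edge_cover V E = (LEAST n. \<exists>F. is_edge_cover V E F \<and> card F = n)"

definition rho :: "'a set \<Rightarrow> 'a set set \<Rightarrow> nat" where
  "rho V E = (\<Sum>C \<in> components V E.
      if card C = 1 then 1 else min_edge_cover C (induced_edges E C))"

end

theory Submission
  imports Defs
begin

text \<open>If a vertex of degree k met no added edge, deleting its k edges would isolate it in
  the augmented graph, contradicting (k+1)-edge connectivity; so the added edges cover X.
  An added edge with both ends in X is an edge of the complement induced on X, so no added
  edge meets two of its components. Hence the added edges meeting the components C form
  disjoint families; each is nonempty, and for nontrivial C it yields an edge cover of C of
  no larger size by replacing every edge leaving C with an edge of C at its endpoint in C.\<close>

lemma sym_adj_rel: "sym (adj_rel E)"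
  by (auto simp: sym_def adj_rel_def insert_commute)

lemma adj_rel_rtrancl_sym: "(u, v) \<in> (adj_rel E)\<^sup>* \<Longrightarrow> (v, u) \<in> (adj_rel E)\<^sup>*"
  by (rule symD[OF sym_rtrancl[OF sym_adj_rel]])

lemma adj_rel_rtrancl_isolated:
  assumes "\<forall>e\<in>E. v \<notin> e" and "(v, u) \<in> (adj_rel E)\<^sup>*"
  shows "u = v"
  using assms(2) by (rule converse_rtranclE) (use assms(1) in \<open>auto simp: adj_rel_def\<close>)

lemma edge_connectivity_le_degree:
  assumes "u \<in> V" "v \<in> V" "u \<noteq> v"
  shows "edge_connectivity V E \<le> degree E v"
proof -
  let ?F = "{e \<in> E. v \<in> e}"
  have "\<not> connected_graph V (E - ?F)"
    using adj_rel_rtrancl_isolated[of "E - ?F" v u] assms by (auto simp: connected_graph_def)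
  then have "\<exists>F\<subseteq>E. card F = degree E v \<and> \<not> connected_graph V (E - F)"
    unfolding degree_def by (intro exI[of _ ?F]) auto
  then show ?thesis
    unfolding edge_connectivity_def by (rule Least_le)
qed

lemma finite_all_pairs: "finite V \<Longrightarrow> finite (all_pairs V)"
  by (rule finite_subset[of _ "Pow V"]) (auto simp: all_pairs_def)

lemma augmentation_covers_degree_vertex:
  assumes "simple_graph V E" "F \<subseteq> all_pairs V"
    and "k_edge_connected k V E" "k_edge_connected (k + 1) V (E \<union> F)"
    and "v \<in> V" "degree E v = k"
  shows "\<exists>e\<in>F. v \<in> e"
proof (rule ccontr)
  assume "\<not> ?thesis"
  then have "{e \<in> E \<union> F. v \<in> e} = {e \<in> E. v \<in> e}" by blast
  then have degree_eq: "degree (E \<union> F) v = k" using assms(6) by (simp add: degree_def)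
  obtain u where u: "u \<in> V" "u \<noteq> v"
  proof (rule ccontr)
    assume "\<not> thesis"
    then have "V \<subseteq> {v}" using that by blast
    then have "all_pairs V = {}" by (auto simp: all_pairs_def)
    then have "E \<union> F = E" using assms(1,2) by (auto simp: simple_graph_def)
    then show False using assms(3,4) by (simp add: k_edge_connected_def)
  qed
  have "edge_connectivity V (E \<union> F) = k + 1"
    using assms(4) by (simp add: k_edge_connected_def)
  then show False
    using edge_connectivity_le_degree[OF u(1) assms(5) u(2), of "E \<union> F"] degree_eq by simp
qed

definition component_of :: "'a set \<Rightarrow> 'a set set \<Rightarrow> 'a \<Rightarrow> 'a set" where
  "component_of V E u = {v \<in> V. (u, v) \<in> (adj_rel E)\<^sup>*}"

lemma components_eq_image: "components V E = component_of V E ` V"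
  by (auto simp: components_def component_of_def)

lemma component_of_eq:
  assumes "v \<in> component_of V E u"
  shows "component_of V E v = component_of V E u"
proof -
  have "(u, v) \<in> (adj_rel E)\<^sup>*" "(v, u) \<in> (adj_rel E)\<^sup>*"
    using assms adj_rel_rtrancl_sym by (auto simp: component_of_def)
  then show ?thesis
    by (auto simp: component_of_def intro: rtrancl_trans)
qed

lemma components_subset: "C \<in> components V E \<Longrightarrow> C \<subseteq> V"
  by (auto simp: components_def)

lemma components_disjoint:
  assumes "C1 \<in> components V E" "C2 \<in> components V E" "x \<in> C1" "x \<in> C2"
  shows "C1 = C2"
  using assms component_of_eq by (metis components_eq_image imageE)

lemma component_edge_closed:
  assumes "C \<in> components V E" "{a, b} \<in> E" "a \<in> C" "b \<in> V"
  shows "b \<in> C"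
proof -
  obtain u where C: "C = component_of V E u"
    using assms(1) by (auto simp: components_eq_image)
  have "(u, a) \<in> (adj_rel E)\<^sup>*" using assms(3) C by (simp add: component_of_def)
  moreover have "(a, b) \<in> (adj_rel E)\<^sup>=" using assms(2) by (auto simp: adj_rel_def)
  ultimately have "(u, b) \<in> (adj_rel E)\<^sup>*" by auto
  then show ?thesis using assms(4) C by (simp add: component_of_def)
qed

lemma component_neighbour:
  assumes "\<forall>e\<in>E. e \<subseteq> V" "C \<in> components V E" "v \<in> C" "C \<noteq> {v}"
  shows "\<exists>w\<in>C. {v, w} \<in> E"
proof -
  obtain w where w: "w \<in> C" "w \<noteq> v" using assms(3,4) by blast
  obtain u where "C = component_of V E u"
    using assms(2) by (auto simp: components_eq_image)
  then have C: "C = component_of V E v" using component_of_eq assms(3) by metis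
  then have "(v, w) \<in> (adj_rel E)\<^sup>*" using w(1) by (simp add: component_of_def)
  then obtain z where "(v, z) \<in> adj_rel E"
    using w(2) by (blast elim: converse_rtranclE)
  then have vz: "{v, z} \<in> E" by (simp add: adj_rel_def)
  then have "z \<in> V" using assms(1) by blast
  then have "z \<in> C" using component_edge_closed[OF assms(2) vz assms(3)] by blast
  with vz show ?thesis by blast
qed

lemma min_edge_cover_le_card:
  assumes "finite F"
    and pairs: "\<forall>e\<in>F. \<exists>a b. e = {a, b}"
    and meets: "\<forall>e\<in>F. e \<inter> C \<noteq> {}"
    and covers: "\<forall>v\<in>C. \<exists>e\<in>F. v \<in> e"
    and inner: "\<forall>e\<in>F. e \<subseteq> C \<longrightarrow> e \<in> H"
    and neighbour: "\<forall>v\<in>C. \<exists>w. {v, w} \<in> H"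
  shows "min_edge_cover C H \<le> card F"
proof -
  obtain nb where nb: "\<And>v. v \<in> C \<Longrightarrow> {v, nb v} \<in> H" using neighbour by metis
  define g where "g e = (if e \<subseteq> C then e else {the_elem (e \<inter> C), nb (the_elem (e \<inter> C))})" for e
  have leaving: "g e = {v, nb v}" if "e \<in> F" "\<not> e \<subseteq> C" "v \<in> e" "v \<in> C" for e v
  proof -
    have "e \<inter> C = {v}" using pairs that by fastforce
    then show ?thesis using that(2) by (simp add: g_def)
  qed
  have "is_edge_cover C H (g ` F)"
    unfolding is_edge_cover_def
  proof (intro conjI ballI subsetI)
    fix f assume "f \<in> g ` F"
    then obtain e where e: "e \<in> F" "f = g e" by blast
    show "f \<in> H"
    proof (cases "e \<subseteq> C")
      case True
      then show ?thesis using e inner by (simp add: g_def)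
    next
      case False
      obtain v where "v \<in> e" "v \<in> C" using meets e(1) by blast
      then show ?thesis using leaving[OF e(1) False] e(2) nb by simp
    qed
  next
    fix v assume v: "v \<in> C"
    then obtain e where e: "e \<in> F" "v \<in> e" using covers by blast
    then have "v \<in> g e" using leaving[OF e(1) _ e(2) v] by (cases "e \<subseteq> C") (auto simp: g_def)
    then show "\<exists>f\<in>g ` F. v \<in> f" using e(1) by blast
  qed
  then have "min_edge_cover C H \<le> card (g ` F)"
    unfolding min_edge_cover_def by (intro Least_le) blast
  also have "\<dots> \<le> card F" using card_image_le[OF \<open>finite F\<close>] .
  finally show ?thesis .
qed

lemma component_weight_le_card:
  assumes "finite F" "\<forall>e\<in>F. \<exists>a b. e = {a, b}" "\<forall>e\<in>F. e \<inter> C \<noteq> {}"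
    and covers: "\<forall>v\<in>C. \<exists>e\<in>F. v \<in> e"
    and inner: "\<forall>e\<in>F. e \<subseteq> V \<longrightarrow> e \<in> E"
    and "\<forall>e\<in>E. e \<subseteq> V" and C: "C \<in> components V E"
  shows "(if card C = 1 then 1 else min_edge_cover C (induced_edges E C)) \<le> card F"
proof (cases "card C = 1")
  case True
  then obtain v where "v \<in> C" by (auto simp: card_1_singleton_iff)
  then have "F \<noteq> {}" using covers by blast
  then have "card F \<ge> 1" using \<open>finite F\<close> by (simp add: Suc_le_eq card_gt_0_iff)
  with True show ?thesis by simp
next
  case False
  have "C \<subseteq> V" using C by (rule components_subset)
  have "\<forall>v\<in>C. \<exists>w. {v, w} \<in> induced_edges E C"
  proof
    fix v assume "v \<in> C"
    moreover have "C \<noteq> {v}" using False by auto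
    ultimately obtain w where "w \<in> C" "{v, w} \<in> E"
      using component_neighbour[OF assms(6) C] by blast
    with \<open>v \<in> C\<close> show "\<exists>w. {v, w} \<in> induced_edges E C" by (auto simp: induced_edges_def)
  qed
  moreover have "\<forall>e\<in>F. e \<subseteq> C \<longrightarrow> e \<in> induced_edges E C"
    using inner \<open>C \<subseteq> V\<close> by (auto simp: induced_edges_def)
  ultimately show ?thesis
    using False min_edge_cover_le_card[OF assms(1-4)] by simp
qed

lemma rho_le_card_cover:
  assumes "finite V" and E_on_V: "\<forall>e\<in>E. e \<subseteq> V"
    and "finite F" and pairs: "\<forall>e\<in>F. \<exists>a b. e = {a, b}"
    and covers: "\<forall>v\<in>V. \<exists>e\<in>F. v \<in> e"
    and inner: "\<forall>e\<in>F. e \<subseteq> V \<longrightarrow> e \<in> E"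
  shows "rho V E \<le> card F"
proof -
  define crossing where "crossing C = {e \<in> F. e \<inter> C \<noteq> {}}" for C
  have crossing_disjoint: "crossing C1 \<inter> crossing C2 = {}"
    if C: "C1 \<in> components V E" "C2 \<in> components V E" "C1 \<noteq> C2" for C1 C2
  proof (rule ccontr)
    assume "crossing C1 \<inter> crossing C2 \<noteq> {}"
    then obtain e x y where e: "e \<in> F" "x \<in> e" "x \<in> C1" "y \<in> e" "y \<in> C2"
      by (auto simp: crossing_def)
    have "x \<noteq> y" using components_disjoint[OF C(1,2) e(3)] C(3) e(5) by blast
    moreover obtain a b where "e = {a, b}" using pairs e(1) by blast
    ultimately have "e = {x, y}" using e(2,4) by auto
    moreover have "x \<in> V" "y \<in> V"
      using components_subset[OF C(1)] components_subset[OF C(2)] e(3,5) by blast+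
    ultimately have "{x, y} \<in> E" "y \<in> V" using inner e(1) by auto
    then have "y \<in> C1" by (rule component_edge_closed[OF C(1) _ e(3)])
    then show False using components_disjoint[OF C(1,2) _ e(5)] C(3) by blast
  qed
  have "finite (components V E)"
    using \<open>finite V\<close> by (simp add: components_eq_image)
  have "rho V E = (\<Sum>C\<in>components V E.
      if card C = 1 then 1 else min_edge_cover C (induced_edges E C))"
    by (simp add: rho_def)
  also have "\<dots> \<le> (\<Sum>C\<in>components V E. card (crossing C))"
  proof (rule sum_mono)
    fix C assume C: "C \<in> components V E"
    have "\<forall>v\<in>C. \<exists>e\<in>crossing C. v \<in> e"
    proof
      fix v assume "v \<in> C"
      then obtain e where "e \<in> F" "v \<in> e" using covers components_subset[OF C] by blast
      with \<open>v \<in> C\<close> show "\<exists>e\<in>crossing C. v \<in> e" by (auto simp: crossing_def)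
    qed
    moreover have "finite (crossing C)" using \<open>finite F\<close> by (simp add: crossing_def)
    ultimately show "(if card C = 1 then 1 else min_edge_cover C (induced_edges E C))
        \<le> card (crossing C)"
      using component_weight_le_card[OF _ _ _ _ _ E_on_V C] pairs inner
      by (simp add: crossing_def)
  qed
  also have "\<dots> = card (\<Union>C\<in>components V E. crossing C)"
    using \<open>finite (components V E)\<close> \<open>finite F\<close> crossing_disjoint
    by (intro card_UN_disjoint[symmetric]) (auto simp: crossing_def)
  also have "\<dots> \<le> card F"
    using \<open>finite F\<close> by (intro card_mono) (auto simp: crossing_def)
  finally show ?thesis .
qed

theorem lemma7:
  fixes V :: "'a set" and E :: "'a set set" and k :: nat
  assumes "simple_graph V E"
    and "cograph V E"
    and "k_edge_connected k V E"
    and "X = {v \<in> V. degree E v = k}"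
    and "Eca \<subseteq> complement_edges V E"
    and "k_edge_connected (k + 1) V (E \<union> Eca)"
  shows "card Eca \<ge> rho X (induced_edges (complement_edges V E) X)"
proof -
  have "finite V" using assms(1) by (simp add: simple_graph_def)
  have Eca_pairs: "Eca \<subseteq> all_pairs V" using assms(5) by (auto simp: complement_edges_def)
  show ?thesis
  proof (rule rho_le_card_cover)
    show "finite X" using \<open>finite V\<close> assms(4) by simp
    show "\<forall>e\<in>induced_edges (complement_edges V E) X. e \<subseteq> X"
      by (simp add: induced_edges_def)
    show "finite Eca"
      using Eca_pairs finite_all_pairs[OF \<open>finite V\<close>] by (rule finite_subset)
    show "\<forall>e\<in>Eca. \<exists>a b. e = {a, b}" using Eca_pairs unfolding all_pairs_def by blast
    show "\<forall>v\<in>X. \<exists>e\<in>Eca. v \<in> e"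
      using augmentation_covers_degree_vertex[OF assms(1) Eca_pairs assms(3,6)] assms(4) by blast
    show "\<forall>e\<in>Eca. e \<subseteq> X \<longrightarrow> e \<in> induced_edges (complement_edges V E) X"
      using assms(5) by (auto simp: induced_edges_def)
  qed
qed

end
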